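(* Let $s\in\{+1,-1\}$ and let $q\ge1$ be an integer. Let $f:\mathbb Z_{2q+1}\to\mathbb R$ be nonzero and even, with $sf(0)\le0$ and $\widehat f(0)\le0$. Then $$\#\{n\in\mathbb Z_{2q+1}: f(n)<0\}\cdot\#\{k\in\mathbb Z_{2q+1}: s\widehat f(k)<0\}\ \ge\ \frac{2q+1}{16}.$$
   Context: $\mathbb Z_{2q+1}$ is the group of integers modulo $2q+1$, with representatives $\{-q,\dots,q\}$. The discrete Fourier transform is $\widehat f(k)=\frac{1}{\sqrt{2q+1}}\sum_{n=-q}^qf(n)e^{-2\pi ikn/(2q+1)}$; for even real $f$ it is real and even. *)

theory Defs
  imports Complex_Main
begin

text \<open>Z_(2q+1) is represented by the integers {-q..q}; functions on it are
  functions int => real, only their values on {-q..q} matter.\<close>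

definition dft :: "int \<Rightarrow> (int \<Rightarrow> real) \<Rightarrow> int \<Rightarrow> complex" where
  "dft q f k = (1 / complex_of_real (sqrt (real_of_int (2*q+1)))) *
     (\<Sum>n\<in>{-q..q}. complex_of_real (f n) *
        exp (- 2 * pi * \<i> * of_int k * of_int n / of_int (2*q+1)))"

end

theory Submission
  imports Defs
begin

text \<open>Write \<open>N = 2q+1\<close>, \<open>\<parallel>f\<parallel>\<^sub>1 = \<Sum>|f n|\<close>, and let \<open>a\<close>, \<open>b\<close> be the two cardinalities.
  Since \<open>f\<close> is even, \<open>\<hat>f\<close> is the cosine transform and inverts back to \<open>f\<close>, so
  \<open>|\<hat>f k| \<le> \<parallel>f\<parallel>\<^sub>1/\<surd>N\<close> and \<open>|f n| \<le> \<parallel>\<hat>f\<parallel>\<^sub>1/\<surd>N\<close>.  The sign conditions say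
  \<open>\<Sum>f = \<surd>N \<hat>f(0) \<le> 0\<close> and \<open>\<Sum>s\<hat>f = \<surd>N s f(0) \<le> 0\<close>; a real family with nonpositive sum
  has at least half of its \<open>\<ell>\<^sup>1\<close> mass on its negative entries, which gives
  \<open>\<parallel>f\<parallel>\<^sub>1 \<le> 2a\<parallel>\<hat>f\<parallel>\<^sub>1/\<surd>N\<close> and \<open>\<parallel>\<hat>f\<parallel>\<^sub>1 \<le> 2b\<parallel>f\<parallel>\<^sub>1/\<surd>N\<close>.  Combining, \<open>N \<le> 4ab\<close>,
  which is stronger than the claimed bound.\<close>

lemma abs_sum_le_sum_abs_if_bounded:
  fixes g c :: "'a \<Rightarrow> 'b::linordered_idom"
  assumes "\<And>x. x \<in> A \<Longrightarrow> \<bar>c x\<bar> \<le> 1"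
  shows "\<bar>\<Sum>x\<in>A. g x * c x\<bar> \<le> (\<Sum>x\<in>A. \<bar>g x\<bar>)"
  by (rule order_trans[OF sum_abs sum_mono]) (use assms in \<open>auto simp: abs_mult intro: mult_left_le\<close>)

lemma sum_abs_le_twice_card_neg:
  fixes h :: "'a \<Rightarrow> 'b::linordered_idom"
  assumes "finite A" "(\<Sum>x\<in>A. h x) \<le> 0" "\<And>x. x \<in> A \<Longrightarrow> \<bar>h x\<bar> \<le> M"
  shows "(\<Sum>x\<in>A. \<bar>h x\<bar>) \<le> 2 * of_nat (card {x\<in>A. h x < 0}) * M"
proof -
  have "(\<Sum>x\<in>A. \<bar>h x\<bar>) \<le> (\<Sum>x\<in>A. h x + 2 * (if h x < 0 then \<bar>h x\<bar> else 0))"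
    by (rule sum_mono) auto
  also have "\<dots> = (\<Sum>x\<in>A. h x) + 2 * (\<Sum>x\<in>{x\<in>A. h x < 0}. \<bar>h x\<bar>)"
    using assms(1) by (simp only: sum.distrib sum_distrib_left[symmetric] sum.inter_filter)
  also have "\<dots> \<le> 0 + 2 * (of_nat (card {x\<in>A. h x < 0}) * M)"
  proof -
    have "(\<Sum>x\<in>{x\<in>A. h x < 0}. \<bar>h x\<bar>) \<le> of_nat (card {x\<in>A. h x < 0}) * M"
      by (rule sum_bounded_above) (use assms(3) in blast)
    with assms(2) show ?thesis by (intro add_mono mult_left_mono) auto
  qed
  finally show ?thesis by (simp add: mult.assoc)
qed

lemma sin_half_times_sum_cos:
  fixes a b :: int and t :: real
  assumes "a - 1 \<le> b"
  shows "2 * sin (t/2) * (\<Sum>k\<in>{a..b}. cos (of_int k * t))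
           = sin ((of_int b + 1/2) * t) - sin ((of_int a - 1/2) * t)"
  using assms
proof (induction b rule: int_ge_induct)
  case base
  then show ?case by simp
next
  case (step b)
  have "{a..b+1} = insert (b+1) {a..b}" using step by auto
  moreover have "2 * sin (t/2) * cos (of_int (b+1) * t)
      = sin (of_int (b+1) * t + t/2) - sin (of_int (b+1) * t - t/2)"
    by (simp add: sin_add sin_diff)
  moreover have "of_int (b+1) * t + t/2 = (of_int (b+1) + 1/2) * t"
    and "of_int (b+1) * t - t/2 = (of_int b + 1/2) * t"
    by (simp_all add: algebra_simps)
  ultimately show ?case using step by (simp add: distrib_left)
qed

definition dft_cos :: "int \<Rightarrow> int \<Rightarrow> int \<Rightarrow> real" where
  "dft_cos q k n = cos (2 * pi * of_int k * of_int n / of_int (2*q+1))"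

lemma abs_dft_cos_le_one: "\<bar>dft_cos q k n\<bar> \<le> 1"
  by (simp add: dft_cos_def abs_cos_le_one)

lemma sum_dft_cos:
  fixes q j :: int
  assumes "q \<ge> 0" "\<bar>j\<bar> \<le> 2*q"
  shows "(\<Sum>k\<in>{-q..q}. dft_cos q k j) = (if j = 0 then of_int (2*q+1) else 0)"
proof (cases "j = 0")
  case True
  then show ?thesis using assms by (simp add: dft_cos_def)
next
  case False
  define N where "N = real_of_int (2*q+1)"
  have "N > 0" using assms by (simp add: N_def)
  define t where "t = 2 * pi * of_int j / N"
  \<comment> \<open>\<open>0 < |j| < N\<close> keeps \<open>t/2\<close> off the zeros of \<open>sin\<close>, so telescoping kills the sum.\<close>
  have sin_half: "sin (t/2) \<noteq> 0"
  proof
    assume "sin (t/2) = 0"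
    then obtain i :: int where "t/2 = of_int i * pi" by (auto simp: sin_zero_iff_int2)
    then have "pi * of_int j / N = of_int i * pi" by (simp add: t_def)
    with \<open>N > 0\<close> have "of_int j = of_int i * N" by (simp add: field_simps)
    then have "j = i * (2*q+1)" unfolding N_def by (metis of_int_eq_iff of_int_mult)
    moreover from this False have "i \<noteq> 0" by auto
    ultimately have "\<bar>j\<bar> \<ge> 2*q+1" using assms by (simp add: abs_mult)
    with assms show False by simp
  qed
  have "(of_int q + 1/2) * t = of_int j * pi" "(of_int (-q) - 1/2) * t = - (of_int j * pi)"
    using \<open>N > 0\<close> by (simp_all add: t_def N_def field_simps)
  moreover have "sin (of_int j * pi) = 0" by (simp add: sin_times_pi_eq_0)
  ultimately have "2 * sin (t/2) * (\<Sum>k\<in>{-q..q}. cos (of_int k * t)) = 0"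
    using sin_half_times_sum_cos[of "-q" q t] assms by simp
  with sin_half have "(\<Sum>k\<in>{-q..q}. cos (of_int k * t)) = 0" by simp
  then show ?thesis using False by (simp add: dft_cos_def t_def N_def mult_ac)
qed

lemma sum_dft_cos_times_dft_cos:
  fixes q n m :: int
  assumes "q \<ge> 0" "n \<in> {-q..q}" "m \<in> {-q..q}"
  shows "(\<Sum>k\<in>{-q..q}. dft_cos q k n * dft_cos q k m)
           = of_int (2*q+1) / 2 * ((if n = m then 1 else 0) + (if n = -m then 1 else 0))"
proof -
  have "dft_cos q k n * dft_cos q k m = (dft_cos q k (n - m) + dft_cos q k (n + m)) / 2" for k
    unfolding dft_cos_def cos_times_cos
    by (simp add: algebra_simps diff_divide_distrib add_divide_distrib)
  then have "(\<Sum>k\<in>{-q..q}. dft_cos q k n * dft_cos q k m)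
      = ((\<Sum>k\<in>{-q..q}. dft_cos q k (n - m)) + (\<Sum>k\<in>{-q..q}. dft_cos q k (n + m))) / 2"
    by (simp only: sum_divide_distrib[symmetric] sum.distrib)
  also have "\<dots> = of_int (2*q+1) / 2 * ((if n = m then 1 else 0) + (if n = -m then 1 else 0))"
  proof -
    have "\<bar>n - m\<bar> \<le> 2*q" "\<bar>n + m\<bar> \<le> 2*q" using assms by auto
    then show ?thesis using assms(1) by (simp only: sum_dft_cos) auto
  qed
  finally show ?thesis .
qed

lemma Re_dft_eq:
  "Re (dft q f k) = (\<Sum>n\<in>{-q..q}. f n * dft_cos q k n) / sqrt (of_int (2*q+1))"
proof -
  have "exp (- 2 * pi * \<i> * of_int k * of_int n / of_int (2*q+1))
      = cis (- (2 * pi * of_int k * of_int n / of_int (2*q+1)))" for n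
    by (simp add: cis_conv_exp algebra_simps)
  then show ?thesis
    by (simp add: dft_def dft_cos_def Re_divide_of_real)
qed

lemma dft_inversion_even:
  fixes q m :: int and f :: "int \<Rightarrow> real"
  assumes "q \<ge> 0" and even: "\<forall>n\<in>{-q..q}. f (-n) = f n" and m: "m \<in> {-q..q}"
  shows "f m = (\<Sum>k\<in>{-q..q}. Re (dft q f k) * dft_cos q k m) / sqrt (of_int (2*q+1))"
proof -
  define N where "N = real_of_int (2*q+1)"
  have "N > 0" using assms by (simp add: N_def)
  have "(\<Sum>k\<in>{-q..q}. (\<Sum>n\<in>{-q..q}. f n * dft_cos q k n) * dft_cos q k m)
      = (\<Sum>n\<in>{-q..q}. f n * (\<Sum>k\<in>{-q..q}. dft_cos q k n * dft_cos q k m))"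
    by (simp only: sum_distrib_left sum_distrib_right mult.assoc) (rule sum.swap)
  also have "\<dots> = (\<Sum>n\<in>{-q..q}. (if n = m then N/2 * f n else 0) + (if n = -m then N/2 * f n else 0))"
    using assms by (intro sum.cong) (auto simp: sum_dft_cos_times_dft_cos N_def)
  also have "\<dots> = N/2 * f m + N/2 * f (-m)"
    using m by (simp add: sum.distrib)
  also have "\<dots> = N * f m" using even m by simp
  finally have "(\<Sum>k\<in>{-q..q}. (\<Sum>n\<in>{-q..q}. f n * dft_cos q k n) * dft_cos q k m) = N * f m" .
  moreover have "(\<Sum>k\<in>{-q..q}. Re (dft q f k) * dft_cos q k m)
      = (\<Sum>k\<in>{-q..q}. (\<Sum>n\<in>{-q..q}. f n * dft_cos q k n) * dft_cos q k m) / sqrt N"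
    by (simp only: Re_dft_eq N_def times_divide_eq_left sum_divide_distrib[symmetric])
  ultimately show ?thesis
    unfolding N_def[symmetric] using \<open>N > 0\<close> by (simp add: real_sqrt_mult_self)
qed

lemma abs_Re_dft_le:
  assumes "q \<ge> 0"
  shows "\<bar>Re (dft q f k)\<bar> \<le> (\<Sum>n\<in>{-q..q}. \<bar>f n\<bar>) / sqrt (of_int (2*q+1))"
proof -
  have "\<bar>\<Sum>n\<in>{-q..q}. f n * dft_cos q k n\<bar> \<le> (\<Sum>n\<in>{-q..q}. \<bar>f n\<bar>)"
    by (intro abs_sum_le_sum_abs_if_bounded abs_dft_cos_le_one)
  then show ?thesis using assms by (simp add: Re_dft_eq abs_divide divide_right_mono)
qed

lemma abs_le_sum_abs_Re_dft:
  fixes q m :: int and f :: "int \<Rightarrow> real"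
  assumes "q \<ge> 0" "\<forall>n\<in>{-q..q}. f (-n) = f n" "m \<in> {-q..q}"
  shows "\<bar>f m\<bar> \<le> (\<Sum>k\<in>{-q..q}. \<bar>Re (dft q f k)\<bar>) / sqrt (of_int (2*q+1))"
proof -
  have "\<bar>\<Sum>k\<in>{-q..q}. Re (dft q f k) * dft_cos q k m\<bar> \<le> (\<Sum>k\<in>{-q..q}. \<bar>Re (dft q f k)\<bar>)"
    by (intro abs_sum_le_sum_abs_if_bounded abs_dft_cos_le_one)
  then show ?thesis
    using assms(1) by (subst dft_inversion_even[OF assms]) (simp add: abs_divide divide_right_mono)
qed

lemma sum_eq_Re_dft_zero:
  assumes "q \<ge> 0"
  shows "(\<Sum>n\<in>{-q..q}. f n) = sqrt (of_int (2*q+1)) * Re (dft q f 0)"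
  using assms by (simp add: Re_dft_eq dft_cos_def)

lemma sum_Re_dft_eq:
  fixes q :: int and f :: "int \<Rightarrow> real"
  assumes "q \<ge> 0" "\<forall>n\<in>{-q..q}. f (-n) = f n"
  shows "(\<Sum>k\<in>{-q..q}. Re (dft q f k)) = sqrt (of_int (2*q+1)) * f 0"
  using dft_inversion_even[OF assms, of 0] assms(1) by (simp add: dft_cos_def)

lemma sum_abs_le_card_neg_times_sum_abs_dft:
  fixes q :: int and f :: "int \<Rightarrow> real"
  assumes "q \<ge> 0" "\<forall>n\<in>{-q..q}. f (-n) = f n" "Re (dft q f 0) \<le> 0"
  shows "(\<Sum>n\<in>{-q..q}. \<bar>f n\<bar>)
           \<le> 2 * real (card {n\<in>{-q..q}. f n < 0})
               * ((\<Sum>k\<in>{-q..q}. \<bar>Re (dft q f k)\<bar>) / sqrt (of_int (2*q+1)))"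
proof -
  have "(\<Sum>n\<in>{-q..q}. f n) \<le> 0"
    using assms(1,3) by (simp add: sum_eq_Re_dft_zero mult_nonneg_nonpos)
  then show ?thesis
    using abs_le_sum_abs_Re_dft[OF assms(1,2)] by (intro sum_abs_le_twice_card_neg) auto
qed

lemma sum_abs_dft_le_card_neg_times_sum_abs:
  fixes q :: int and s :: real and f :: "int \<Rightarrow> real"
  assumes "q \<ge> 0" "\<forall>n\<in>{-q..q}. f (-n) = f n" "\<bar>s\<bar> = 1" "s * f 0 \<le> 0"
  shows "(\<Sum>k\<in>{-q..q}. \<bar>Re (dft q f k)\<bar>)
           \<le> 2 * real (card {k\<in>{-q..q}. s * Re (dft q f k) < 0})
               * ((\<Sum>n\<in>{-q..q}. \<bar>f n\<bar>) / sqrt (of_int (2*q+1)))"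
proof -
  have "(\<Sum>k\<in>{-q..q}. s * Re (dft q f k)) = sqrt (of_int (2*q+1)) * (s * f 0)"
    by (simp add: sum_distrib_left[symmetric] sum_Re_dft_eq[OF assms(1,2)])
  also have "\<dots> \<le> 0"
    using assms(1,4) by (simp add: mult_nonneg_nonpos)
  finally have "(\<Sum>k\<in>{-q..q}. \<bar>s * Re (dft q f k)\<bar>)
      \<le> 2 * real (card {k\<in>{-q..q}. s * Re (dft q f k) < 0})
          * ((\<Sum>n\<in>{-q..q}. \<bar>f n\<bar>) / sqrt (of_int (2*q+1)))"
    using assms(3) abs_Re_dft_le[OF assms(1), of f]
    by (intro sum_abs_le_twice_card_neg) (auto simp: abs_mult)
  then show ?thesis using assms(3) by (simp add: abs_mult)
qed

theorem mainTheorem15: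
  fixes q :: int and s :: real and f :: "int \<Rightarrow> real"
  assumes "s = 1 \<or> s = -1"
    and "q \<ge> 1"
    and nonzero: "\<exists>n\<in>{-q..q}. f n \<noteq> 0"
    and even: "\<forall>n\<in>{-q..q}. f (-n) = f n"
    and "s * f 0 \<le> 0"
    and "Re (dft q f 0) \<le> 0"
  shows "real (card {n\<in>{-q..q}. f n < 0}) * real (card {k\<in>{-q..q}. s * Re (dft q f k) < 0})
           \<ge> real_of_int (2*q+1) / 16"
proof -
  define N where "N = real_of_int (2*q+1)"
  define a where "a = real (card {n\<in>{-q..q}. f n < 0})"
  define b where "b = real (card {k\<in>{-q..q}. s * Re (dft q f k) < 0})"
  define F where "F = (\<Sum>n\<in>{-q..q}. \<bar>f n\<bar>)"
  define G where "G = (\<Sum>k\<in>{-q..q}. \<bar>Re (dft q f k)\<bar>)"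
  have "q \<ge> 0" "N > 0" "\<bar>s\<bar> = 1" using assms(1,2) by (auto simp: N_def)
  have "F \<le> 2 * a * (G / sqrt N)"
    using sum_abs_le_card_neg_times_sum_abs_dft[OF \<open>q \<ge> 0\<close> even assms(6)]
    unfolding F_def G_def a_def N_def .
  also have "\<dots> \<le> 2 * a * (2 * b * (F / sqrt N) / sqrt N)"
    using sum_abs_dft_le_card_neg_times_sum_abs[OF \<open>q \<ge> 0\<close> even \<open>\<bar>s\<bar> = 1\<close> assms(5)] \<open>N > 0\<close>
    unfolding F_def G_def b_def N_def[symmetric]
    by (intro mult_left_mono divide_right_mono) (auto simp: a_def)
  also have "\<dots> = F * (4 * a * b) / N"
    using \<open>N > 0\<close> by (simp add: field_simps)
  finally have "F * N \<le> F * (4 * a * b)"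
    using \<open>N > 0\<close> by (simp add: field_simps)
  moreover have "F > 0"
  proof -
    obtain n where "n \<in> {-q..q}" "f n \<noteq> 0" using nonzero by blast
    then have "\<bar>f n\<bar> \<le> F" unfolding F_def by (intro member_le_sum) auto
    with \<open>f n \<noteq> 0\<close> show ?thesis by simp
  qed
  ultimately have "N \<le> 4 * a * b" by simp
  moreover have "a * b \<ge> 0" by (simp add: a_def b_def)
  ultimately have "N / 16 \<le> a * b" by simp
  then show ?thesis unfolding a_def b_def N_def .
qed

end
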